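(* Let $S\subseteq\mathbb{R}^n\times\mathbb{R}^p$ be sign-invariant with respect to $x$, and let $S_0=S\cap(\mathbb{R}^n_+\times\mathbb{R}^p)$. Then $$\mathrm{conv}(S)=\{(x,z)\mid \exists u\in\mathbb{R}^n:\ (u,z)\in\mathrm{conv}(S_0),\ u\ge|x|\},$$ where $|x|$ is the componentwise absolute value and $u\ge|x|$ is componentwise.
   Context: A set $S\subseteq\mathbb{R}^n\times\mathbb{R}^p$ is sign-invariant with respect to $x$ if $(x,z)\in S$ implies $(\bar x,z)\in S$ for every $\bar x\in\mathbb{R}^n$ with $|\bar x|=|x|$ (componentwise absolute values). *)

theory Defs
  imports "HOL-Analysis.Analysis"
begin

definition sign_invariant :: "((real^'n) \<times> (real^'p)) set \<Rightarrow> bool" where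
  "sign_invariant S \<longleftrightarrow>
     (\<forall>x z xb. (x, z) \<in> S \<and> (\<forall>i. \<bar>xb $ i\<bar> = \<bar>x $ i\<bar>) \<longrightarrow> (xb, z) \<in> S)"

end

theory Submission
  imports Defs
begin

text \<open>Write a point of the right-hand side as \<open>(r * u, z)\<close> with \<open>(u, z) \<in> conv S\<^sub>0\<close> and
  \<open>\<bar>r $ i\<bar> \<le> 1\<close>. Multiplying the first block by a fixed \<open>r\<close> is linear, so it suffices to
  check \<open>(r * y, w) \<in> conv S\<close> for \<open>(y, w) \<in> S\<close>. As a function of \<open>r\<close> this set is convex and,
  by sign-invariance, contains every sign vector; hence it contains the whole cube, which is the
  convex hull of the sign vectors. Conversely, the right-hand side is convex and contains \<open>S\<close>
  (take \<open>u = \<bar>x\<bar>\<close>).\<close>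

lemma cube_subset_convex:
  fixes C :: "(real^'n) set"
  assumes "convex C"
    and signs: "\<And>s. (\<forall>i. \<bar>s $ i\<bar> = 1) \<Longrightarrow> s \<in> C"
    and "\<forall>i. \<bar>r $ i\<bar> \<le> 1"
  shows "r \<in> C"
proof -
  have "\<forall>r. (\<forall>i. \<bar>r $ i\<bar> \<le> 1) \<and> (\<forall>i. i \<notin> I \<longrightarrow> \<bar>r $ i\<bar> = 1) \<longrightarrow> r \<in> C"
    if "finite I" for I
    using that
  proof (induction I rule: finite_induct)
    case empty
    then show ?case using signs by auto
  next
    case (insert k I)
    show ?case
    proof (intro allI impI)
      fix r :: "real^'n"
      assume r: "(\<forall>i. \<bar>r $ i\<bar> \<le> 1) \<and> (\<forall>i. i \<notin> insert k I \<longrightarrow> \<bar>r $ i\<bar> = 1)"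
      define r_plus :: "real^'n" where "r_plus = (\<chi> j. if j = k then 1 else r $ j)"
      define r_minus :: "real^'n" where "r_minus = (\<chi> j. if j = k then -1 else r $ j)"
      have "r_plus \<in> C" "r_minus \<in> C"
        using insert.IH r by (auto simp: r_plus_def r_minus_def)
      moreover have "\<bar>r $ k\<bar> \<le> 1"
        using r by auto
      ultimately have "((1 + r $ k) / 2) *\<^sub>R r_plus + ((1 - r $ k) / 2) *\<^sub>R r_minus \<in> C"
        by (intro convexD[OF \<open>convex C\<close>]) (auto simp: field_simps)
      moreover have "((1 + r $ k) / 2) *\<^sub>R r_plus + ((1 - r $ k) / 2) *\<^sub>R r_minus = r"
        by (simp add: vec_eq_iff r_plus_def r_minus_def field_simps)
      ultimately show "r \<in> C"
        by simp
    qed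
  qed
  from this[OF finite_class.finite_UNIV] show ?thesis
    using assms(3) by blast
qed

lemma mult_in_convex_hull_if_sign_invariant:
  fixes S :: "((real^'n) \<times> (real^'p)) set"
  assumes "sign_invariant S" and "(y, w) \<in> S" and "\<forall>i. \<bar>r $ i\<bar> \<le> 1"
  shows "(r * y, w) \<in> convex hull S"
proof (rule cube_subset_convex[where C = "{r. (r * y, w) \<in> convex hull S}", simplified])
  show "convex {r. (r * y, w) \<in> convex hull S}"
  proof (rule convexI)
    fix r\<^sub>1 r\<^sub>2 :: "real^'n" and a b :: real
    assume "r\<^sub>1 \<in> {r. (r * y, w) \<in> convex hull S}" "r\<^sub>2 \<in> {r. (r * y, w) \<in> convex hull S}"
      and ab: "0 \<le> a" "0 \<le> b" "a + b = 1"
    then have "a *\<^sub>R (r\<^sub>1 * y, w) + b *\<^sub>R (r\<^sub>2 * y, w) \<in> convex hull S"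
      by (intro convexD) auto
    moreover have "a *\<^sub>R (r\<^sub>1 * y, w) + b *\<^sub>R (r\<^sub>2 * y, w) = ((a *\<^sub>R r\<^sub>1 + b *\<^sub>R r\<^sub>2) * y, w)"
      using ab by (simp add: vec_eq_iff algebra_simps flip: scaleR_add_left)
    ultimately show "a *\<^sub>R r\<^sub>1 + b *\<^sub>R r\<^sub>2 \<in> {r. (r * y, w) \<in> convex hull S}"
      by simp
  qed
next
  fix s :: "real^'n"
  assume "\<forall>i. \<bar>s $ i\<bar> = 1"
  then have "\<forall>i. \<bar>(s * y) $ i\<bar> = \<bar>y $ i\<bar>"
    by (simp add: abs_mult)
  then show "(s * y, w) \<in> convex hull S"
    using assms(1,2) unfolding sign_invariant_def by (blast intro: hull_inc)
qed (fact assms(3))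

lemma mult_in_convex_hull_of_convex_hull_if_sign_invariant:
  fixes S :: "((real^'n) \<times> (real^'p)) set"
  assumes "sign_invariant S" and "(y, w) \<in> convex hull S" and r: "\<forall>i. \<bar>r $ i\<bar> \<le> 1"
  shows "(r * y, w) \<in> convex hull S"
proof -
  have "linear (\<lambda>(y, w). (r * y :: real^'n, w :: real^'p))"
    by (auto simp: linear_iff vec_eq_iff algebra_simps)
  then have "convex hull S \<subseteq> (\<lambda>(y, w). (r * y, w)) -` (convex hull S)"
    using mult_in_convex_hull_if_sign_invariant[OF assms(1) _ r]
    by (intro hull_minimal convex_linear_vimage convex_convex_hull) auto
  then show ?thesis
    using assms(2) by auto
qed

lemma sign_invariant_abs_mem:
  fixes S :: "((real^'n) \<times> (real^'p)) set"
  assumes "sign_invariant S" and "(x, z) \<in> S"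
  shows "((\<chi> i. \<bar>x $ i\<bar>), z) \<in> S"
proof -
  have "\<forall>i. \<bar>(\<chi> i. \<bar>x $ i\<bar>) $ i\<bar> = \<bar>x $ i\<bar>"
    by simp
  then show ?thesis
    using assms unfolding sign_invariant_def by blast
qed

lemma convex_abs_dominated:
  fixes C :: "((real^'n) \<times> 'b::real_vector) set"
  assumes "convex C"
  shows "convex {(x, z). \<exists>u. (u, z) \<in> C \<and> (\<forall>i. \<bar>x $ i\<bar> \<le> u $ i)}"
proof (rule convexI, clarsimp)
  fix x\<^sub>1 x\<^sub>2 u\<^sub>1 u\<^sub>2 :: "real^'n" and z\<^sub>1 z\<^sub>2 :: 'b and a b :: real
  assume "(u\<^sub>1, z\<^sub>1) \<in> C" "(u\<^sub>2, z\<^sub>2) \<in> C"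
    and le: "\<forall>i. \<bar>x\<^sub>1 $ i\<bar> \<le> u\<^sub>1 $ i" "\<forall>i. \<bar>x\<^sub>2 $ i\<bar> \<le> u\<^sub>2 $ i"
    and ab: "0 \<le> a" "0 \<le> b" "a + b = 1"
  then have "a *\<^sub>R (u\<^sub>1, z\<^sub>1) + b *\<^sub>R (u\<^sub>2, z\<^sub>2) \<in> C"
    using \<open>convex C\<close> by (intro convexD) auto
  moreover have "\<bar>a * x\<^sub>1 $ i + b * x\<^sub>2 $ i\<bar> \<le> a * u\<^sub>1 $ i + b * u\<^sub>2 $ i" for i
  proof -
    have "\<bar>a * x\<^sub>1 $ i + b * x\<^sub>2 $ i\<bar> \<le> a * \<bar>x\<^sub>1 $ i\<bar> + b * \<bar>x\<^sub>2 $ i\<bar>"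
      using ab by (metis abs_mult abs_of_nonneg abs_triangle_ineq)
    also have "\<dots> \<le> a * u\<^sub>1 $ i + b * u\<^sub>2 $ i"
      using ab le by (intro add_mono mult_left_mono) auto
    finally show ?thesis .
  qed
  ultimately show "\<exists>u. (u, a *\<^sub>R z\<^sub>1 + b *\<^sub>R z\<^sub>2) \<in> C \<and>
      (\<forall>i. \<bar>a * x\<^sub>1 $ i + b * x\<^sub>2 $ i\<bar> \<le> u $ i)"
    by (intro exI[of _ "a *\<^sub>R u\<^sub>1 + b *\<^sub>R u\<^sub>2"]) simp
qed

lemma abs_le_obtains_mult:
  fixes x u :: "real^'n"
  assumes le: "\<forall>i. \<bar>x $ i\<bar> \<le> u $ i"
  obtains r where "\<forall>i. \<bar>r $ i\<bar> \<le> 1" and "x = r * u"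
proof
  define r :: "real^'n" where "r = (\<chi> i. if u $ i = 0 then 0 else x $ i / u $ i)"
  show "\<forall>i. \<bar>r $ i\<bar> \<le> 1"
  proof
    fix i
    have "\<bar>x $ i\<bar> \<le> \<bar>u $ i\<bar>"
      using le[rule_format, of i] abs_ge_self[of "u $ i"] by linarith
    then show "\<bar>r $ i\<bar> \<le> 1"
      by (simp add: r_def abs_divide divide_le_eq_1)
  qed
  show "x = r * u"
    unfolding vec_eq_iff
  proof
    fix i
    show "x $ i = (r * u) $ i"
      using le[rule_format, of i] by (cases "u $ i = 0") (simp_all add: r_def)
  qed
qed

theorem theorem3:
  fixes S :: "((real^'n) \<times> (real^'p)) set"
  assumes "sign_invariant S"
  shows "convex hull S =
    {(x, z). \<exists>u :: real^'n.
       (u, z) \<in> convex hull (S \<inter> {(y, w). \<forall>i. 0 \<le> y $ i}) \<and>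
       (\<forall>i. \<bar>x $ i\<bar> \<le> u $ i)}"
  (is "_ = ?R")
proof
  let ?S\<^sub>0 = "S \<inter> {(y, w). \<forall>i. 0 \<le> y $ i}"
  have "S \<subseteq> ?R"
  proof clarify
    fix x z
    assume "(x, z) \<in> S"
    then have "((\<chi> i. \<bar>x $ i\<bar>), z) \<in> ?S\<^sub>0"
      using sign_invariant_abs_mem[OF assms] by simp
    then have "((\<chi> i. \<bar>x $ i\<bar>), z) \<in> convex hull ?S\<^sub>0"
      by (rule hull_inc)
    then show "\<exists>u. (u, z) \<in> convex hull ?S\<^sub>0 \<and> (\<forall>i. \<bar>x $ i\<bar> \<le> u $ i)"
      by force
  qed
  then show "convex hull S \<subseteq> ?R"
    by (intro hull_minimal convex_abs_dominated convex_convex_hull)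
  show "?R \<subseteq> convex hull S"
  proof clarify
    fix x z u
    assume "(u, z) \<in> convex hull ?S\<^sub>0" and "\<forall>i. \<bar>x $ i\<bar> \<le> u $ i"
    then obtain r where r: "\<forall>i. \<bar>r $ i\<bar> \<le> 1" and "x = r * u"
      by (blast elim: abs_le_obtains_mult)
    have "convex hull ?S\<^sub>0 \<subseteq> convex hull S"
      by (intro hull_mono) blast
    then have "(u, z) \<in> convex hull S"
      using \<open>(u, z) \<in> convex hull ?S\<^sub>0\<close> by blast
    then show "(x, z) \<in> convex hull S"
      unfolding \<open>x = r * u\<close> by (rule mult_in_convex_hull_of_convex_hull_if_sign_invariant[OF assms _ r])
  qed
qed

end
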